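(* Let $R$ be an associative ring with identity. The following are equivalent: (1) $R$ has stable range one; (2) for every $c \in R$ and every $x \in R$ such that $yx - 1 \in Rc$ for some $y \in R$, there exists a left unit $u \in R$ with $x - u \in Rc$; (3) for every $c \in R$ and every $x \in R$ such that $xy - 1 \in cR$ for some $y \in R$, there exists a right unit $u \in R$ with $x - u \in cR$.
   Context: A ring $R$ has stable range one if whenever $a, b, x \in R$ satisfy $ax + b = 1$, there exists $y \in R$ such that $a + by$ is a unit (invertible element) of $R$. An element $u \in R$ is a left unit if there exists $v \in R$ with $vu = 1$, and a right unit if there exists $v \in R$ with $uv = 1$. Condition (2) is what the paper calls "every left unit lifts modulo every left principal ideal", and condition (3) is what it calls "every right unit lifts modulo every right principal ideal". *)

theory Defs
  imports Main
begin

definition is_unit :: "'a::ring_1 \<Rightarrow> bool" where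
  "is_unit u \<longleftrightarrow> (\<exists>v. u * v = 1 \<and> v * u = 1)"

definition left_unit :: "'a::ring_1 \<Rightarrow> bool" where
  "left_unit u \<longleftrightarrow> (\<exists>v. v * u = 1)"

definition right_unit :: "'a::ring_1 \<Rightarrow> bool" where
  "right_unit u \<longleftrightarrow> (\<exists>v. u * v = 1)"

definition stable_range_one :: "'a::ring_1 itself \<Rightarrow> bool" where
  "stable_range_one _ \<longleftrightarrow>
     (\<forall>a b x :: 'a. a * x + b = 1 \<longrightarrow> (\<exists>y. is_unit (a + b * y)))"

definition left_principal :: "'a::ring_1 \<Rightarrow> 'a set" where
  "left_principal c = {r * c | r. True}"

definition right_principal :: "'a::ring_1 \<Rightarrow> 'a set" where
  "right_principal c = {c * r | r. True}"

end

theory Submission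
  imports Defs
begin

text \<open>
  Stable range one is left-right symmetric: if \<open>a + (1 - ax)y\<close> is a unit then so is
  \<open>x + (1 - xy)u'(1 - ax)\<close>, with an explicit inverse, and dually.  Given stable range one,
  a relation \<open>xy + cs = 1\<close> yields a unit \<open>x + csz\<close>, which lifts \<open>x\<close> modulo \<open>cR\<close>.
  Conversely, if right units lift modulo right principal ideals then one-sided inverses are
  two-sided (lift \<open>v\<close> with \<open>uv = 1\<close> modulo \<open>(1 - vu)R\<close>), so every lifted right unit is a unit;
  lifting \<open>a\<close> modulo \<open>bR\<close> from \<open>ax + b = 1\<close> then gives stable range one.  The left-handed
  statement follows from the right-handed argument applied to the left-handed stable range
  condition.
\<close>

definition left_stable_range_one :: "'a::ring_1 itself \<Rightarrow> bool" where
  "left_stable_range_one _ \<longleftrightarrow>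
     (\<forall>a b x :: 'a. x * a + b = 1 \<longrightarrow> (\<exists>y. is_unit (a + y * b)))"

definition left_units_lift :: "'a::ring_1 itself \<Rightarrow> bool" where
  "left_units_lift _ \<longleftrightarrow>
     (\<forall>c x :: 'a. (\<exists>y. y * x - 1 \<in> left_principal c) \<longrightarrow>
        (\<exists>u. left_unit u \<and> x - u \<in> left_principal c))"

definition right_units_lift :: "'a::ring_1 itself \<Rightarrow> bool" where
  "right_units_lift _ \<longleftrightarrow>
     (\<forall>c x :: 'a. (\<exists>y. x * y - 1 \<in> right_principal c) \<longrightarrow>
        (\<exists>u. right_unit u \<and> x - u \<in> right_principal c))"

lemma is_unit_stable_range_swap_right:
  fixes a x y u' :: "'a::ring_1"
  assumes "u' * (a + (1 - a*x)*y) = 1" and "(a + (1 - a*x)*y) * u' = 1"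
  shows "is_unit (x + (1 - x*y)*u'*(1 - a*x))"
proof -
  define u where "u = a + (1 - a*x)*y"
  define v where "v = x + (1 - x*y)*u'*(1 - a*x)"
  \<comment> \<open>the inverse of \<open>v\<close>; it intertwines \<open>1 - ax\<close> with \<open>1 - xa\<close> and \<open>1 - xy\<close> with \<open>1 - yx\<close>\<close>
  define w where "w = a + y - y*x*a"
  have u'u: "u' * u = 1" and uu': "u * u' = 1" using assms by (simp_all add: u_def)
  have left: "(1 - a*x)*w = u*(1 - x*a)" unfolding w_def u_def by (simp add: algebra_simps)
  have right: "w*(1 - x*y) = (1 - y*x)*u" unfolding w_def u_def by (simp add: algebra_simps)
  have "v*w = x*w + (1 - x*y)*u'*((1 - a*x)*w)" unfolding v_def by (simp add: algebra_simps)
  also have "\<dots> = x*w + (1 - x*y)*(u'*u)*(1 - x*a)" by (simp add: left mult.assoc)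
  also have "\<dots> = 1" unfolding u'u w_def by (simp add: algebra_simps)
  finally have vw: "v*w = 1" .
  have "w*v = w*x + (w*(1 - x*y))*u'*(1 - a*x)" unfolding v_def by (simp add: algebra_simps)
  also have "\<dots> = w*x + (1 - y*x)*(u*u')*(1 - a*x)" by (simp add: right mult.assoc)
  also have "\<dots> = 1" unfolding uu' w_def by (simp add: algebra_simps)
  finally have "w*v = 1" .
  with vw show ?thesis unfolding is_unit_def v_def by blast
qed

lemma is_unit_stable_range_swap_left:
  fixes a x y u' :: "'a::ring_1"
  assumes "u' * (a + y*(1 - x*a)) = 1" and "(a + y*(1 - x*a)) * u' = 1"
  shows "is_unit (x + (1 - x*a)*u'*(1 - y*x))"
proof -
  define u where "u = a + y*(1 - x*a)"
  define v where "v = x + (1 - x*a)*u'*(1 - y*x)"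
  define w where "w = a + y - a*x*y"
  have u'u: "u' * u = 1" and uu': "u * u' = 1" using assms by (simp_all add: u_def)
  have left: "(1 - y*x)*w = u*(1 - x*y)" unfolding w_def u_def by (simp add: algebra_simps)
  have right: "w*(1 - x*a) = (1 - a*x)*u" unfolding w_def u_def by (simp add: algebra_simps)
  have "v*w = x*w + (1 - x*a)*u'*((1 - y*x)*w)" unfolding v_def by (simp add: algebra_simps)
  also have "\<dots> = x*w + (1 - x*a)*(u'*u)*(1 - x*y)" by (simp add: left mult.assoc)
  also have "\<dots> = 1" unfolding u'u w_def by (simp add: algebra_simps)
  finally have vw: "v*w = 1" .
  have "w*v = w*x + (w*(1 - x*a))*u'*(1 - y*x)" unfolding v_def by (simp add: algebra_simps)
  also have "\<dots> = w*x + (1 - a*x)*(u*u')*(1 - y*x)" by (simp add: right mult.assoc)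
  also have "\<dots> = 1" unfolding uu' w_def by (simp add: algebra_simps)
  finally have "w*v = 1" .
  with vw show ?thesis unfolding is_unit_def v_def by blast
qed

lemma stable_range_one_imp_left_stable_range_one:
  assumes "stable_range_one TYPE('a::ring_1)"
  shows "left_stable_range_one TYPE('a)"
  unfolding left_stable_range_one_def
proof (intro allI impI)
  fix a b x :: 'a
  assume "x * a + b = 1"
  hence b: "b = 1 - x*a" by (simp add: algebra_simps)
  have "x * a + (1 - x*a) = 1" by simp
  with assms obtain y where "is_unit (x + (1 - x*a)*y)"
    unfolding stable_range_one_def by blast
  then obtain u' where "u' * (x + (1 - x*a)*y) = 1" "(x + (1 - x*a)*y) * u' = 1"
    unfolding is_unit_def by blast
  from is_unit_stable_range_swap_right[OF this]
  have "is_unit (a + ((1 - a*y)*u')*(1 - x*a))" by (simp add: mult.assoc)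
  thus "\<exists>y. is_unit (a + y * b)" using b by blast
qed

lemma left_stable_range_one_imp_stable_range_one:
  assumes "left_stable_range_one TYPE('a::ring_1)"
  shows "stable_range_one TYPE('a)"
  unfolding stable_range_one_def
proof (intro allI impI)
  fix a b x :: 'a
  assume "a * x + b = 1"
  hence b: "b = 1 - a*x" by (simp add: algebra_simps)
  have "a * x + (1 - a*x) = 1" by simp
  with assms obtain y where "is_unit (x + y*(1 - a*x))"
    unfolding left_stable_range_one_def by blast
  then obtain u' where "u' * (x + y*(1 - a*x)) = 1" "(x + y*(1 - a*x)) * u' = 1"
    unfolding is_unit_def by blast
  from is_unit_stable_range_swap_left[OF this]
  have "is_unit (a + (1 - a*x)*(u'*(1 - y*a)))" by (simp add: mult.assoc)
  thus "\<exists>y. is_unit (a + b * y)" using b by blast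
qed

lemma stable_range_one_iff_left_stable_range_one:
  "stable_range_one TYPE('a::ring_1) \<longleftrightarrow> left_stable_range_one TYPE('a)"
  using stable_range_one_imp_left_stable_range_one
    left_stable_range_one_imp_stable_range_one by blast

lemma stable_range_one_imp_right_units_lift:
  assumes "stable_range_one TYPE('a::ring_1)"
  shows "right_units_lift TYPE('a)"
  unfolding right_units_lift_def
proof (intro allI impI)
  fix c x :: 'a
  assume "\<exists>y. x * y - 1 \<in> right_principal c"
  then obtain y r where "x * y - 1 = c * r" unfolding right_principal_def by blast
  hence "x * y + c * (- r) = 1" by (simp add: algebra_simps)
  with assms obtain z where "is_unit (x + c*(-r)*z)"
    unfolding stable_range_one_def by blast
  moreover have "x - (x + c*(-r)*z) = c * (r*z)" by (simp add: algebra_simps)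
  ultimately show "\<exists>u. right_unit u \<and> x - u \<in> right_principal c"
    unfolding right_unit_def is_unit_def right_principal_def by blast
qed

lemma right_units_lift_imp_right_inverse_comm:
  fixes u v :: "'a::ring_1"
  assumes lift: "right_units_lift TYPE('a)" and uv: "u * v = 1"
  shows "v * u = 1"
proof -
  define e where "e = 1 - v*u"
  have "v * u - 1 = e * (-1)" unfolding e_def by simp
  hence "v * u - 1 \<in> right_principal e" unfolding right_principal_def by blast
  with lift obtain w where "right_unit w" "v - w \<in> right_principal e"
    unfolding right_units_lift_def by blast
  then obtain z s where wz: "w * z = 1" and "v - w = e * s"
    unfolding right_unit_def right_principal_def by blast
  hence w: "w = v - e*s" by (simp add: algebra_simps)
  have "u * e = 0" unfolding e_def using uv by (simp add: algebra_simps flip: mult.assoc)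
  hence uw: "u * w = 1" unfolding w using uv by (simp add: algebra_simps flip: mult.assoc)
  have "z = u" using uw wz by (metis mult.assoc mult_1_left mult_1_right)
  hence wu: "w * u = 1" using wz by simp
  have "v = w" using uv wu by (metis mult.assoc mult_1_left mult_1_right)
  thus ?thesis using wu by simp
qed

lemma right_units_lift_imp_stable_range_one:
  assumes lift: "right_units_lift TYPE('a::ring_1)"
  shows "stable_range_one TYPE('a)"
  unfolding stable_range_one_def
proof (intro allI impI)
  fix a b x :: 'a
  assume "a * x + b = 1"
  hence "a * x - 1 = b * (-1)" by (simp add: algebra_simps)
  hence "a * x - 1 \<in> right_principal b" unfolding right_principal_def by blast
  with lift obtain w where "right_unit w" "a - w \<in> right_principal b"
    unfolding right_units_lift_def by blast
  then obtain z s where wz: "w * z = 1" and "a - w = b * s"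
    unfolding right_unit_def right_principal_def by blast
  hence "w = a + b * (-s)" by (simp add: algebra_simps)
  moreover have "is_unit w"
    using wz right_units_lift_imp_right_inverse_comm[OF lift wz] unfolding is_unit_def by blast
  ultimately show "\<exists>y. is_unit (a + b * y)" by blast
qed

lemma stable_range_one_iff_right_units_lift:
  "stable_range_one TYPE('a::ring_1) \<longleftrightarrow> right_units_lift TYPE('a)"
  using stable_range_one_imp_right_units_lift right_units_lift_imp_stable_range_one by blast

lemma left_stable_range_one_imp_left_units_lift:
  assumes "left_stable_range_one TYPE('a::ring_1)"
  shows "left_units_lift TYPE('a)"
  unfolding left_units_lift_def
proof (intro allI impI)
  fix c x :: 'a
  assume "\<exists>y. y * x - 1 \<in> left_principal c"
  then obtain y r where "y * x - 1 = r * c" unfolding left_principal_def by blast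
  hence "y * x + (- r) * c = 1" by (simp add: algebra_simps)
  with assms obtain z where "is_unit (x + z*((-r)*c))"
    unfolding left_stable_range_one_def by blast
  moreover have "x - (x + z*((-r)*c)) = (z*r) * c" by (simp add: algebra_simps)
  ultimately show "\<exists>u. left_unit u \<and> x - u \<in> left_principal c"
    unfolding left_unit_def is_unit_def left_principal_def by blast
qed

lemma left_units_lift_imp_left_inverse_comm:
  fixes u v :: "'a::ring_1"
  assumes lift: "left_units_lift TYPE('a)" and vu: "v * u = 1"
  shows "u * v = 1"
proof -
  define e where "e = 1 - u*v"
  have "u * v - 1 = (-1) * e" unfolding e_def by simp
  hence "u * v - 1 \<in> left_principal e" unfolding left_principal_def by blast
  with lift obtain w where "left_unit w" "v - w \<in> left_principal e"
    unfolding left_units_lift_def by blast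
  then obtain z s where zw: "z * w = 1" and "v - w = s * e"
    unfolding left_unit_def left_principal_def by blast
  hence w: "w = v - s*e" by (simp add: algebra_simps)
  have "e * u = 0" unfolding e_def using vu by (simp add: algebra_simps mult.assoc)
  hence wu: "w * u = 1" unfolding w using vu by (simp add: algebra_simps mult.assoc)
  have "z = u" using wu zw by (metis mult.assoc mult_1_left mult_1_right)
  hence uw: "u * w = 1" using zw by simp
  have "v = w" using vu uw by (metis mult.assoc mult_1_left mult_1_right)
  thus ?thesis using uw by simp
qed

lemma left_units_lift_imp_left_stable_range_one:
  assumes lift: "left_units_lift TYPE('a::ring_1)"
  shows "left_stable_range_one TYPE('a)"
  unfolding left_stable_range_one_def
proof (intro allI impI)
  fix a b x :: 'a
  assume "x * a + b = 1"
  hence "x * a - 1 = (-1) * b" by (simp add: algebra_simps)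
  hence "x * a - 1 \<in> left_principal b" unfolding left_principal_def by blast
  with lift obtain w where "left_unit w" "a - w \<in> left_principal b"
    unfolding left_units_lift_def by blast
  then obtain z s where zw: "z * w = 1" and "a - w = s * b"
    unfolding left_unit_def left_principal_def by blast
  hence "w = a + (-s) * b" by (simp add: algebra_simps)
  moreover have "is_unit w"
    using zw left_units_lift_imp_left_inverse_comm[OF lift zw] unfolding is_unit_def by blast
  ultimately show "\<exists>y. is_unit (a + y * b)" by blast
qed

lemma left_stable_range_one_iff_left_units_lift:
  "left_stable_range_one TYPE('a::ring_1) \<longleftrightarrow> left_units_lift TYPE('a)"
  using left_stable_range_one_imp_left_units_lift left_units_lift_imp_left_stable_range_one
  by blast

theorem theorem3:
  shows "(stable_range_one TYPE('a::ring_1)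
           \<longleftrightarrow> (\<forall>c x :: 'a. (\<exists>y. y * x - 1 \<in> left_principal c) \<longrightarrow>
                  (\<exists>u. left_unit u \<and> x - u \<in> left_principal c)))
       \<and> (stable_range_one TYPE('a)
           \<longleftrightarrow> (\<forall>c x :: 'a. (\<exists>y. x * y - 1 \<in> right_principal c) \<longrightarrow>
                  (\<exists>u. right_unit u \<and> x - u \<in> right_principal c)))"
  using stable_range_one_iff_left_stable_range_one left_stable_range_one_iff_left_units_lift
    stable_range_one_iff_right_units_lift
  unfolding left_units_lift_def right_units_lift_def by blast

end
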